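(* Let $p>155$ be a prime, let $G$ be a cyclic group of order $p$, let $g\in G\setminus\{0\}$, and let $S$ be an unsplittable minimal zero-sum sequence over $G$ of length $\frac{p-1}{2}$ which is one of $$g^{\frac{p-11}{2}}\Big(\tfrac{p+3}{2}g\Big)^4\Big(\tfrac{p-1}{2}g\Big)\quad\text{or}\quad g^{\frac{p-7}{2}}\Big(\tfrac{p+5}{2}g\Big)^2\Big(\tfrac{p-3}{2}g\Big).$$ Then $\operatorname{ind}(S)=2$.
   Context: A sequence over $G$ is a finite unordered list of elements of $G$ with repetition allowed, written multiplicatively; $h^r$ denotes $r$ copies of $h$ and $tg$ is the $t$-fold multiple of $g$. $S$ is a minimal zero-sum sequence if its sum is $0$ and no nonempty proper subsequence has sum $0$; it is unsplittable if there do not exist $h\in\operatorname{supp}(S)$ and $y,z\in G$ with $y+z=h$ such that replacing one copy of $h$ in $S$ by the two terms $y,z$ gives again a minimal zero-sum sequence. For $h\in G$ nonzero of order $n$ and $S=(x_1h)\cdots(x_lh)$ with integers $1\le x_i\le n$, the $h$-norm is $\|S\|_h=(x_1+\dots+x_l)/n$. If $\langle\operatorname{supp}(S)\rangle$ is a nontrivial finite cyclic group, $\operatorname{ind}(S)=\min\{\|S\|_h: h\in G,\ \langle\operatorname{supp}(S)\rangle=\langle h\rangle\}$. *)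

theory Defs
  imports Complex_Main "HOL-Library.Multiset" "HOL-Computational_Algebra.Primes"
begin

text \<open>The cyclic group of order p is modelled as the additive group of residues
  {0..<p} with addition modulo p. Sequences are multisets over it.\<close>

definition in_grp :: "nat \<Rightarrow> nat multiset \<Rightarrow> bool" where
  "in_grp p S \<longleftrightarrow> (\<forall>a\<in>#S. a < p)"

definition zero_sum :: "nat \<Rightarrow> nat multiset \<Rightarrow> bool" where
  "zero_sum p S \<longleftrightarrow> sum_mset S mod p = 0"

definition minimal_zero_sum :: "nat \<Rightarrow> nat multiset \<Rightarrow> bool" where
  "minimal_zero_sum p S \<longleftrightarrow> in_grp p S \<and> S \<noteq> {#} \<and> zero_sum p S \<and>
     (\<forall>T. T \<noteq> {#} \<and> T \<subset># S \<longrightarrow> \<not> zero_sum p T)"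

definition unsplittable :: "nat \<Rightarrow> nat multiset \<Rightarrow> bool" where
  "unsplittable p S \<longleftrightarrow> \<not> (\<exists>h\<in>#S. \<exists>y z. y < p \<and> z < p \<and> (y + z) mod p = h \<and>
      minimal_zero_sum p (S - {#h#} + {#y, z#}))"

definition gen :: "nat \<Rightarrow> nat set \<Rightarrow> nat set" where
  "gen p A = {y. y < p \<and> (\<exists>c :: nat \<Rightarrow> nat. y = (\<Sum>a\<in>A. c a * a) mod p)}"

definition grp_ord :: "nat \<Rightarrow> nat \<Rightarrow> nat" where
  "grp_ord p h = card (gen p {h})"

definition coef :: "nat \<Rightarrow> nat \<Rightarrow> nat \<Rightarrow> nat" where
  "coef p h a = (THE x. 1 \<le> x \<and> x \<le> grp_ord p h \<and> (x * h) mod p = a)"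

definition hnorm :: "nat \<Rightarrow> nat \<Rightarrow> nat multiset \<Rightarrow> real" where
  "hnorm p h S = real (sum_mset (image_mset (coef p h) S)) / real (grp_ord p h)"

definition ind :: "nat \<Rightarrow> nat multiset \<Rightarrow> real" where
  "ind p S = Min {hnorm p h S | h. h < p \<and> gen p (set_mset S) = gen p {h}}"

end

theory Submission
  imports Defs "HOL-Number_Theory.Cong"
begin

text \<open>Since \<open>p\<close> is prime, every nonzero \<open>h\<close> generates the group, so \<open>ind S\<close> is the
  minimum over all such \<open>h\<close> of \<open>\<parallel>S\<parallel>\<^sub>h\<close>. Writing \<open>m\<close> for the coefficient of \<open>g\<close> with
  respect to \<open>h\<close>, the term \<open>t g\<close> has coefficient \<open>t m mod p\<close>, so \<open>p \<parallel>S\<parallel>\<^sub>h\<close> is an explicit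
  function of \<open>m\<close>. Because \<open>S\<close> has sum zero, \<open>\<parallel>S\<parallel>\<^sub>h\<close> is an integer; an elementary case
  analysis on \<open>m\<close> shows it always exceeds 1, and \<open>m = 2\<close> (first sequence,
  \<open>h = (p + 1)/2 \<cdot> g\<close>) resp. \<open>m = 1\<close> (second sequence, \<open>h = g\<close>) gives exactly 2.\<close>

lemma mult_mod_prime_surj:
  fixes p h a :: nat
  assumes "prime p" "\<not> p dvd h"
  obtains c :: nat where "(c * h) mod p = a mod p"
proof -
  have "gcd h p = 1"
    using assms by (metis coprime_commute coprime_iff_gcd_eq_1 prime_imp_coprime)
  then obtain c where "[h * c = a] (mod p)"
    using cong_solve_dvd_nat[of h p a] by auto
  then show thesis
    using that by (simp add: cong_def mult.commute)
qed

lemma gen_subset_singleton: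
  assumes "finite A" "g \<in> A"
  shows "gen p {g} \<subseteq> gen p A"
proof
  fix y assume "y \<in> gen p {g}"
  then obtain c where y: "y < p" "y = (c g * g) mod p"
    by (auto simp: gen_def)
  have "(\<Sum>a\<in>A. (if a = g then c g else 0) * a) = (\<Sum>a\<in>A. if a = g then c g * g else 0)"
    by (rule sum.cong) auto
  also have "\<dots> = c g * g"
    using assms by simp
  finally have "y = (\<Sum>a\<in>A. (if a = g then c g else 0) * a) mod p"
    using y(2) by simp
  with y(1) show "y \<in> gen p A"
    unfolding gen_def by (auto intro!: exI[of _ "\<lambda>a. if a = g then c g else 0"])
qed

lemma gen_singleton_prime:
  fixes p h :: nat
  assumes "prime p" "0 < h" "h < p"
  shows "gen p {h} = {..<p}"
proof -
  have "\<not> p dvd h" using assms(2,3) by (simp add: nat_dvd_not_less)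
  have "y \<in> gen p {h}" if "y < p" for y
  proof -
    obtain c where "(c * h) mod p = y mod p"
      using mult_mod_prime_surj[OF assms(1) \<open>\<not> p dvd h\<close>] .
    then show ?thesis
      using that unfolding gen_def by (auto intro!: exI[of _ "\<lambda>_. c"])
  qed
  then show ?thesis by (auto simp: gen_def)
qed

lemma gen_zero_singleton: "gen p {0} \<subseteq> {0}"
  by (auto simp: gen_def)

lemma gen_eq_if_mem:
  fixes p g :: nat
  assumes "prime p" "finite A" "g \<in> A" "0 < g" "g < p"
  shows "gen p A = {..<p}"
  using gen_subset_singleton[OF assms(2,3), of p] gen_singleton_prime[OF assms(1,4,5)]
  by (auto simp: gen_def)

lemma grp_ord_prime:
  fixes p h :: nat
  assumes "prime p" "0 < h" "h < p"
  shows "grp_ord p h = p"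
  using gen_singleton_prime[OF assms] by (simp add: grp_ord_def)

lemma mult_mod_prime_inj:
  fixes p h x y :: nat
  assumes "prime p" "\<not> p dvd h" "1 \<le> x" "x \<le> p" "1 \<le> y" "y \<le> p"
    and "(x * h) mod p = (y * h) mod p"
  shows "x = y"
proof -
  have collision_free: False
    if "a < b" "1 \<le> a" "b \<le> p" "(a * h) mod p = (b * h) mod p" for a b
  proof -
    have "a * h \<le> b * h" using that(1) by (simp add: mult_le_mono1)
    from mod_eq_dvd_iff_nat[OF this] that(4)[symmetric] have "p dvd b * h - a * h" by (rule iffD1)
    then have "p dvd (b - a) * h" by (simp add: diff_mult_distrib)
    then have "p dvd b - a"
      using assms(1,2) prime_dvd_mult_iff by blast
    moreover have "0 < b - a" "b - a < p" using that(1-3) by linarith+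
    ultimately show False by (simp add: nat_dvd_not_less)
  qed
  show ?thesis
  proof (rule linorder_cases[of x y])
    assume "x < y"
    from collision_free[OF this assms(3,6,7)] show ?thesis ..
  next
    assume "y < x"
    from collision_free[OF this assms(5,4) assms(7)[symmetric]] show ?thesis ..
  qed
qed

lemma coef_eqI:
  fixes p h x a :: nat
  assumes "prime p" "0 < h" "h < p" "1 \<le> x" "x \<le> p" "(x * h) mod p = a"
  shows "coef p h a = x"
proof -
  have "\<not> p dvd h" using assms(2,3) by (simp add: nat_dvd_not_less)
  show ?thesis
    unfolding coef_def grp_ord_prime[OF assms(1-3)]
  proof (rule the_equality)
    show "1 \<le> x \<and> x \<le> p \<and> (x * h) mod p = a" using assms(4-6) by blast
    fix y assume "1 \<le> y \<and> y \<le> p \<and> (y * h) mod p = a"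
    then show "y = x"
      using mult_mod_prime_inj[OF assms(1) \<open>\<not> p dvd h\<close>] assms(4-6) by blast
  qed
qed

lemma coef_spec:
  fixes p h a :: nat
  assumes "prime p" "0 < h" "h < p" "a < p"
  shows "1 \<le> coef p h a" "coef p h a \<le> p" "(coef p h a * h) mod p = a"
proof -
  have "\<not> p dvd h" using assms(2,3) by (simp add: nat_dvd_not_less)
  then obtain c where c: "(c * h) mod p = a"
    using mult_mod_prime_surj[OF assms(1)] assms(4) by (metis mod_less)
  \<comment> \<open>The residue \<open>0\<close> has coefficient \<open>p\<close>, not \<open>0\<close>, since coefficients range over \<open>1..p\<close>.\<close>
  define x where "x = (if c mod p = 0 then p else c mod p)"
  have "0 < p" using assms(1) prime_gt_0_nat by blast
  then have "1 \<le> x" "x \<le> p" by (auto simp: x_def less_imp_le)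
  moreover have "(x * h) mod p = a"
  proof (cases "c mod p = 0")
    case True
    then have "(c * h) mod p = 0" by (simp add: mod_mult_left_eq [symmetric])
    with True c show ?thesis by (simp add: x_def)
  next
    case False
    with c show ?thesis by (simp add: x_def mod_mult_left_eq)
  qed
  ultimately have "coef p h a = x" by (rule coef_eqI[OF assms(1-3)])
  with \<open>1 \<le> x\<close> \<open>x \<le> p\<close> \<open>(x * h) mod p = a\<close>
  show "1 \<le> coef p h a" "coef p h a \<le> p" "(coef p h a * h) mod p = a" by simp_all
qed

lemma coef_less:
  fixes p h a :: nat
  assumes "prime p" "0 < h" "h < p" "0 < a" "a < p"
  shows "coef p h a < p"
proof -
  have "coef p h a \<noteq> p"
    using coef_spec(3)[OF assms(1-3,5)] assms(4) by auto
  then show ?thesis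
    using coef_spec(2)[OF assms(1-3,5)] by simp
qed

lemma coef_mult_mod:
  fixes p h a t :: nat
  assumes "prime p" "0 < h" "h < p" "0 < a" "a < p" "\<not> p dvd t"
  shows "coef p h ((t * a) mod p) = (t * coef p h a) mod p"
proof (rule coef_eqI[OF assms(1-3)])
  let ?m = "coef p h a"
  have "\<not> p dvd ?m"
    using coef_spec(1)[OF assms(1-3,5)] coef_less[OF assms(1-5)] by (simp add: nat_dvd_not_less)
  then have "\<not> p dvd t * ?m"
    using assms(1,6) prime_dvd_mult_iff by blast
  then show "1 \<le> (t * ?m) mod p" by (simp add: dvd_eq_mod_eq_0 Suc_le_eq)
  show "(t * ?m) mod p \<le> p"
    using assms(1) prime_gt_0_nat by (simp add: less_imp_le)
  have "((t * ?m) mod p * h) mod p = (t * ((?m * h) mod p)) mod p"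
    by (simp add: mod_mult_left_eq mod_mult_right_eq mult.assoc)
  then show "((t * ?m) mod p * h) mod p = (t * a) mod p"
    using coef_spec(3)[OF assms(1-3,5)] by simp
qed

lemma sum_mset_mod_mod:
  fixes m :: nat
  shows "(\<Sum>a\<in>#M. f a mod m) mod m = (\<Sum>a\<in>#M. f a) mod m"
proof (induction M)
  case (add x M)
  have "(f x mod m + (\<Sum>a\<in>#M. f a mod m)) mod m
      = (f x mod m + (\<Sum>a\<in>#M. f a mod m) mod m) mod m"
    by (rule mod_add_right_eq [symmetric])
  also have "\<dots> = (f x + (\<Sum>a\<in>#M. f a)) mod m"
    by (simp only: add.IH mod_add_eq)
  finally show ?case by simp
qed simp

lemma dvd_sum_coef_if_zero_sum:
  fixes p h :: nat
  assumes "prime p" "0 < h" "h < p" "in_grp p S" "zero_sum p S"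
  shows "p dvd (\<Sum>a\<in>#S. coef p h a)"
proof -
  have "(\<Sum>a\<in>#S. (coef p h a * h) mod p) mod p = (\<Sum>a\<in>#S. coef p h a * h) mod p"
    by (rule sum_mset_mod_mod)
  moreover have "(\<Sum>a\<in>#S. (coef p h a * h) mod p) = sum_mset S"
    using coef_spec(3)[OF assms(1-3)] assms(4) by (simp add: in_grp_def image_mset_cong)
  ultimately have "p dvd (\<Sum>a\<in>#S. coef p h a) * h"
    using assms(5) by (simp add: zero_sum_def sum_mset_distrib_right mod_0_imp_dvd)
  then show ?thesis
    using assms(1-3) prime_dvd_mult_iff nat_dvd_not_less by blast
qed

lemma hnorm_prime:
  fixes p h :: nat
  assumes "prime p" "0 < h" "h < p"
  shows "hnorm p h S = real (\<Sum>a\<in>#S. coef p h a) / real p"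
  by (simp add: hnorm_def grp_ord_prime[OF assms])

lemma ind_eqI:
  fixes p n h\<^sub>0 :: nat
  assumes "prime p" "gen p (set_mset S) = {..<p}"
    and "\<And>h. 0 < h \<Longrightarrow> h < p \<Longrightarrow> n * p \<le> (\<Sum>a\<in>#S. coef p h a)"
    and "0 < h\<^sub>0" "h\<^sub>0 < p" "(\<Sum>a\<in>#S. coef p h\<^sub>0 a) = n * p"
  shows "ind p S = n"
  unfolding ind_def
proof (rule Min_eqI)
  let ?N = "{hnorm p h S |h. h < p \<and> gen p (set_mset S) = gen p {h}}"
  have "?N \<subseteq> (\<lambda>h. hnorm p h S) ` {..<p}" by auto
  then show "finite ?N" by (rule finite_subset) simp
  have "0 < p" using assms(1) prime_gt_0_nat by blast
  have "hnorm p h\<^sub>0 S = n"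
    using \<open>0 < p\<close> by (simp add: hnorm_prime[OF assms(1,4,5)] assms(6))
  then show "real n \<in> ?N"
    using assms(2,4,5) gen_singleton_prime[OF assms(1,4,5)] by force
  fix y assume "y \<in> ?N"
  then obtain h where h: "y = hnorm p h S" "h < p" "gen p (set_mset S) = gen p {h}" by blast
  have "1 \<in> gen p {h}"
    using h(3) assms(1,2) prime_gt_1_nat by auto
  then have "0 < h"
    using gen_zero_singleton[of p] by (cases h) auto
  then have "real (n * p) \<le> real (\<Sum>a\<in>#S. coef p h a)"
    using assms(3) h(2) of_nat_le_iff by blast
  then show "real n \<le> y"
    using \<open>0 < p\<close> by (simp add: h(1) hnorm_prime[OF assms(1) \<open>0 < h\<close> h(2)] field_simps)
qed

lemma ind_eq_two_if_norms_exceed_one: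
  fixes p g h\<^sub>0 :: nat
  assumes "prime p" "minimal_zero_sum p S" "g \<in># S" "0 < g" "g < p"
    and "\<And>h. 0 < h \<Longrightarrow> h < p \<Longrightarrow> p < (\<Sum>a\<in>#S. coef p h a)"
    and "0 < h\<^sub>0" "h\<^sub>0 < p" "(\<Sum>a\<in>#S. coef p h\<^sub>0 a) = 2 * p"
  shows "ind p S = 2"
proof -
  have "2 * p \<le> (\<Sum>a\<in>#S. coef p h a)" if "0 < h" "h < p" for h
  proof -
    have "p dvd (\<Sum>a\<in>#S. coef p h a)"
      using dvd_sum_coef_if_zero_sum[OF assms(1) that] assms(2)
      by (simp add: minimal_zero_sum_def)
    then obtain q where "(\<Sum>a\<in>#S. coef p h a) = p * q" ..
    with assms(6)[OF that] show ?thesis by (cases "q \<le> 1") (auto simp: le_Suc_eq)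
  qed
  moreover have "gen p (set_mset S) = {..<p}"
    using gen_eq_if_mem[OF assms(1) _ _ assms(4,5)] assms(3) by simp
  ultimately show ?thesis
    using ind_eqI[OF assms(1), of S 2 h\<^sub>0] assms(7-9) by simp
qed

lemma sum_coef_three_values:
  fixes p h g s t k l :: nat
  assumes "prime p" "0 < h" "h < p" "0 < g" "g < p" "\<not> p dvd s" "\<not> p dvd t"
  shows "(\<Sum>a\<in>#replicate_mset k g + replicate_mset l ((s * g) mod p) + {#(t * g) mod p#}. coef p h a)
       = k * coef p h g + l * ((s * coef p h g) mod p) + (t * coef p h g) mod p"
  using coef_mult_mod[OF assms(1-5)] assms(6,7) by simp

lemma first_family_norm_gt:
  fixes p k m :: nat
  assumes p: "p = 2 * k + 1" and k: "17 \<le> k" and m: "0 < m" "m < p"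
  shows "p < (k - 5) * m + 4 * (((k + 2) * m) mod p) + (k * m) mod p"
proof -
  consider "m = 1" | "m = 2" | "3 \<le> m" using m(1) by linarith
  then show ?thesis
  proof cases
    case 1
    have "(k + 2) mod p = k + 2" using p k by simp
    with 1 p k show ?thesis by simp
  next
    case 2
    have "((k + 2) * 2) mod p = (p + 3) mod p"
      by (rule arg_cong[where f = "\<lambda>x. x mod p"]) (simp add: p)
    also have "\<dots> = 3" using p k by (subst mod_add_self1) simp
    finally have "((k + 2) * 2) mod p = 3" .
    with 2 p k show ?thesis by simp
  next
    case 3
    have "(k - 5) * 3 \<le> (k - 5) * m" using 3 by simp
    with p k show ?thesis by linarith
  qed
qed

lemma first_family_norm_at_two:
  fixes p k :: nat
  assumes p: "p = 2 * k + 1" and k: "5 \<le> k"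
  shows "(k - 5) * 2 + 4 * (((k + 2) * 2) mod p) + (k * 2) mod p = 2 * p"
proof -
  have "((k + 2) * 2) mod p = (p + 3) mod p"
    by (rule arg_cong[where f = "\<lambda>x. x mod p"]) (simp add: p)
  also have "\<dots> = 3" using p k by (subst mod_add_self1) simp
  finally have "((k + 2) * 2) mod p = 3" .
  with p k show ?thesis by simp
qed

lemma second_family_norm_gt:
  fixes p k m :: nat
  assumes p: "p = 2 * k + 1" and k: "11 \<le> k" and m: "0 < m" "m < p"
  shows "p < (k - 3) * m + 2 * (((k + 3) * m) mod p) + ((k - 1) * m) mod p"
proof -
  consider "m = 1" | "m = 2" | "3 \<le> m" using m(1) by linarith
  then show ?thesis
  proof cases
    case 1
    with p k show ?thesis by simp
  next
    case 2
    have "((k + 3) * 2) mod p = (p + 5) mod p"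
      by (rule arg_cong[where f = "\<lambda>x. x mod p"]) (simp add: p)
    also have "\<dots> = 5" using p k by (subst mod_add_self1) simp
    finally have "((k + 3) * 2) mod p = 5" .
    with 2 p k show ?thesis by simp
  next
    case 3
    have "(k - 3) * 3 \<le> (k - 3) * m" using 3 by simp
    with p k show ?thesis by linarith
  qed
qed

lemma second_family_norm_at_one:
  fixes p k :: nat
  assumes "p = 2 * k + 1" and "3 \<le> k"
  shows "(k - 3) + 2 * ((k + 3) mod p) + (k - 1) mod p = 2 * p"
  using assms by simp

lemma ind_first_family:
  fixes p k g :: nat
  assumes prime: "prime p" and p: "p = 2 * k + 1" and k: "17 \<le> k" and g: "0 < g" "g < p"
    and S: "S = replicate_mset (k - 5) g + replicate_mset 4 (((k + 2) * g) mod p) + {#(k * g) mod p#}"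
    and "minimal_zero_sum p S"
  shows "ind p S = 2"
proof -
  have "\<not> p dvd k + 2" "\<not> p dvd k" "\<not> p dvd k + 1" "\<not> p dvd g"
    using p k g by (simp_all add: nat_dvd_not_less)
  note not_dvd = this
  have norm: "(\<Sum>a\<in>#S. coef p h a)
      = (k - 5) * coef p h g + 4 * (((k + 2) * coef p h g) mod p) + (k * coef p h g) mod p"
    if "0 < h" "h < p" for h
    unfolding S by (rule sum_coef_three_values[OF prime that g not_dvd(1,2)])
  define h\<^sub>0 where "h\<^sub>0 = ((k + 1) * g) mod p"
  have "\<not> p dvd (k + 1) * g"
    using prime not_dvd(3,4) prime_dvd_mult_iff by blast
  then have h\<^sub>0: "0 < h\<^sub>0" "h\<^sub>0 < p"
    using p by (simp_all add: h\<^sub>0_def dvd_eq_mod_eq_0)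
  have "(2 * h\<^sub>0) mod p = ((p + 1) * g) mod p"
    unfolding h\<^sub>0_def by (simp add: mod_mult_right_eq p algebra_simps)
  also have "\<dots> = g"
    using g by (simp add: algebra_simps)
  finally have "coef p h\<^sub>0 g = 2"
    by (rule coef_eqI[OF prime h\<^sub>0, of 2 g, rotated -1]) (use p k in simp_all)
  show ?thesis
  proof (rule ind_eq_two_if_norms_exceed_one[OF prime assms(7) _ g _ h\<^sub>0])
    show "g \<in># S" using S k by simp
    show "p < (\<Sum>a\<in>#S. coef p h a)" if "0 < h" "h < p" for h
      using norm[OF that] first_family_norm_gt[OF p k _ coef_less[OF prime that g]]
        coef_spec(1)[OF prime that g(2)] by simp
    show "(\<Sum>a\<in>#S. coef p h\<^sub>0 a) = 2 * p"
      using norm[OF h\<^sub>0] \<open>coef p h\<^sub>0 g = 2\<close> first_family_norm_at_two[OF p] k by simp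
  qed
qed

lemma ind_second_family:
  fixes p k g :: nat
  assumes prime: "prime p" and p: "p = 2 * k + 1" and k: "11 \<le> k" and g: "0 < g" "g < p"
    and S: "S = replicate_mset (k - 3) g + replicate_mset 2 (((k + 3) * g) mod p)
              + {#((k - 1) * g) mod p#}"
    and "minimal_zero_sum p S"
  shows "ind p S = 2"
proof -
  have not_dvd: "\<not> p dvd k + 3" "\<not> p dvd k - 1"
    using p k by (simp_all add: nat_dvd_not_less)
  have norm: "(\<Sum>a\<in>#S. coef p h a)
      = (k - 3) * coef p h g + 2 * (((k + 3) * coef p h g) mod p) + ((k - 1) * coef p h g) mod p"
    if "0 < h" "h < p" for h
    unfolding S by (rule sum_coef_three_values[OF prime that g not_dvd])
  have "coef p g g = 1"
    by (rule coef_eqI[OF prime g]) (use g in simp_all)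
  show ?thesis
  proof (rule ind_eq_two_if_norms_exceed_one[OF prime assms(7) _ g _ g])
    show "g \<in># S" using S k by simp
    show "p < (\<Sum>a\<in>#S. coef p h a)" if "0 < h" "h < p" for h
      using norm[OF that] second_family_norm_gt[OF p k _ coef_less[OF prime that g]]
        coef_spec(1)[OF prime that g(2)] by simp
    show "(\<Sum>a\<in>#S. coef p g a) = 2 * p"
      using norm[OF g] \<open>coef p g g = 1\<close> second_family_norm_at_one[OF p] k by simp
  qed
qed

theorem lemma3p6:
  fixes p g :: nat and S :: "nat multiset"
  assumes "prime p" and "p > 155"
    and "0 < g" and "g < p"
    and "S = replicate_mset ((p - 11) div 2) g + replicate_mset 4 (((p + 3) div 2 * g) mod p)
              + {# ((p - 1) div 2 * g) mod p #}
       \<or> S = replicate_mset ((p - 7) div 2) g + replicate_mset 2 (((p + 5) div 2 * g) mod p)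
              + {# ((p - 3) div 2 * g) mod p #}"
    and "minimal_zero_sum p S" and "unsplittable p S"
    and "size S = (p - 1) div 2"
  shows "ind p S = 2"
proof -
  have "odd p" using prime_odd_nat[OF assms(1)] assms(2) by simp
  then obtain k where p: "p = 2 * k + 1" by (rule oddE)
  have k: "78 \<le> k" using p assms(2) by simp
  have "(p - 11) div 2 = k - 5" "(p + 3) div 2 = k + 2" "(p - 1) div 2 = k"
    "(p - 7) div 2 = k - 3" "(p + 5) div 2 = k + 3" "(p - 3) div 2 = k - 1"
    using p k by simp_all
  with assms(5) consider
      "S = replicate_mset (k - 5) g + replicate_mset 4 (((k + 2) * g) mod p) + {#(k * g) mod p#}"
    | "S = replicate_mset (k - 3) g + replicate_mset 2 (((k + 3) * g) mod p) + {#((k - 1) * g) mod p#}"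
    by argo
  then show ?thesis
  proof cases
    case 1
    from ind_first_family[OF assms(1) p _ assms(3,4) this assms(6)] k show ?thesis by simp
  next
    case 2
    from ind_second_family[OF assms(1) p _ assms(3,4) this assms(6)] k show ?thesis by simp
  qed
qed

end
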